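(* Let $d,n\in\mathbb{N}$ be such that $h_c(d,n)$ is finite (defined). For every $\alpha\in(0,1)$ there exists $\beta=\beta(\alpha,h_c(d,n))\in(0,1)$ such that the following holds: for any finite family $\mathcal{F}$ of axis-parallel boxes in $\mathbb{R}^d$, if at least an $\alpha$ fraction of all $h_c(d,n)$-element subfamilies of $\mathcal{F}$ are $n$-pierceable, then there exists a subfamily of $\mathcal{F}$ of size at least $\beta|\mathcal{F}|$ which is $n$-pierceable.
   Context: An axis-parallel box in $\mathbb{R}^d$ is a set $[\alpha_1,\beta_1]\times\dots\times[\alpha_d,\beta_d]$ with $\alpha_j\le\beta_j$. A family $\mathcal{F}$ is $n$-pierceable if there is $A\subseteq\mathbb{R}^d$, $|A|\le n$, meeting every member of $\mathcal{F}$. Given families $\mathcal{F}_1,\dots,\mathcal{F}_m$, a colorful $t$-tuple is a tuple $(C_1,\dots,C_t)$ with $C_j\in\mathcal{F}_{i_j}$ for pairwise distinct indices $i_1,\dots,i_t\in[m]$. $h_c(d,n)$ denotes the smallest positive integer $h$ such that whenever $\mathcal{F}_1,\dots,\mathcal{F}_h$ are collections of axis-parallel boxes in $\mathbb{R}^d$ with every colorful $h$-tuple $n$-pierceable, some $\mathcal{F}_i$ is $n$-pierceable (e.g. $h_c(1,n)=n+1$, $h_c(d,2)=3d$). *)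

theory Defs
  imports Complex_Main
begin

text \<open>Points of R^d are represented as functions nat => real vanishing at all
  coordinates i >= d.\<close>

definition box_of :: "nat \<Rightarrow> (nat \<Rightarrow> real) \<Rightarrow> (nat \<Rightarrow> real) \<Rightarrow> (nat \<Rightarrow> real) set" where
  "box_of d a b = {x. (\<forall>i<d. a i \<le> x i \<and> x i \<le> b i) \<and> (\<forall>i\<ge>d. x i = 0)}"

definition is_box :: "nat \<Rightarrow> (nat \<Rightarrow> real) set \<Rightarrow> bool" where
  "is_box d C \<longleftrightarrow> (\<exists>a b. (\<forall>i<d. a i \<le> b i) \<and> C = box_of d a b)"

definition pierceable :: "nat \<Rightarrow> ('a set) set \<Rightarrow> bool" where
  "pierceable n F \<longleftrightarrow> (\<exists>A. finite A \<and> card A \<le> n \<and> (\<forall>C\<in>F. A \<inter> C \<noteq> {}))"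

definition hc_prop :: "nat \<Rightarrow> nat \<Rightarrow> nat \<Rightarrow> bool" where
  "hc_prop d n h \<longleftrightarrow> 0 < h \<and>
     (\<forall>Fs :: nat \<Rightarrow> (nat \<Rightarrow> real) set set.
        (\<forall>i<h. \<forall>C\<in>Fs i. is_box d C) \<and>
        (\<forall>g. (\<forall>i<h. g i \<in> Fs i) \<longrightarrow> pierceable n (g ` {..<h}))
        \<longrightarrow> (\<exists>i<h. pierceable n (Fs i)))"

definition hc_defined :: "nat \<Rightarrow> nat \<Rightarrow> bool" where
  "hc_defined d n \<longleftrightarrow> (\<exists>h. hc_prop d n h)"

definition hc :: "nat \<Rightarrow> nat \<Rightarrow> nat" where
  "hc d n = (LEAST h. hc_prop d n h)"

end

theory Submission
  imports Defs
begin

text \<open>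
  Call a family good if it is n-pierceable, and call an h-tuple of boxes bad if its set is not good.
  The colorful property with h colours yields a Helly-type statement (a set all of whose h-tuples
  are good is good: take all colour classes equal) and, more usefully, the following: given bad
  h-tuples T_1, ..., T_(h-1), the set of boxes v such that v together with any transversal of
  T_1, ..., T_(h-1) is good is itself good, because the T_i cannot be.

  Removal: if a family of M boxes has at most eps M^h bad h-tuples, the T_i can be chosen one
  after the other, by averaging, so that at most M/2 boxes fail to be compatible with them; the
  compatible boxes then form a good subfamily of size at least M/2.

  Supersaturation: suppose every good subfamily of F has fewer than beta N members. By removal,
  every subfamily of size M >= 2 beta N has at least eps M^h bad h-tuples. Averaging over the
  choices of j bad tuples and of h - 1 - j further boxes shows by induction on j that the number of
  compatible extensions is at least c_j N^(hj+h-j), starting from the density hypothesis. For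
  j = h - 1 every compatible set is good, hence small, and the resulting upper bound
  beta N^(h(h-1)+1) contradicts the lower bound 2 beta N^(h(h-1)+1).
\<close>

section \<open>Tuples, double counting and averaging\<close>

definition tuples :: "'a set \<Rightarrow> nat \<Rightarrow> 'a list set" where
  "tuples A m = {xs. set xs \<subseteq> A \<and> length xs = m}"

lemma finite_tuples: "finite A \<Longrightarrow> finite (tuples A m)"
  unfolding tuples_def by (rule finite_lists_length_eq)

lemma card_tuples: "finite A \<Longrightarrow> card (tuples A m) = card A ^ m"
  unfolding tuples_def by (rule card_lists_length_eq)

lemma tuples_mono: "A \<subseteq> B \<Longrightarrow> tuples A m \<subseteq> tuples B m"
  unfolding tuples_def by auto

lemma tuples_0 [simp]: "tuples A 0 = {[]}"
  unfolding tuples_def by auto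

lemma tuples_Suc: "tuples A (Suc m) = (\<lambda>(x, xs). x # xs) ` (A \<times> tuples A m)"
  unfolding tuples_def by (auto simp: image_iff length_Suc_conv)

lemma sum_tuples_Suc:
  assumes "finite A"
  shows "(\<Sum>xs\<in>tuples A (Suc m). f xs) = (\<Sum>x\<in>A. \<Sum>xs\<in>tuples A m. f (x # xs))"
proof -
  have inj: "inj_on (\<lambda>(x, xs). x # xs) (A \<times> tuples A m)"
    by (auto simp: inj_on_def)
  have "(\<Sum>xs\<in>tuples A (Suc m). f xs) = (\<Sum>(x, xs)\<in>A \<times> tuples A m. f (x # xs))"
    unfolding tuples_Suc sum.reindex[OF inj] by (simp add: comp_def case_prod_beta)
  then show ?thesis
    by (simp add: sum.cartesian_product)
qed

lemma sum_card_filter_swap: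
  assumes "finite A" "finite B"
  shows "(\<Sum>a\<in>A. card {b\<in>B. P a b}) = (\<Sum>b\<in>B. card {a\<in>A. P a b})"
  using sum.swap_restrict[OF assms, of "\<lambda>_ _. 1::nat" P] by simp

lemma card_filter_eq_sum: "finite A \<Longrightarrow> card {x\<in>A. P x} = (\<Sum>x\<in>A. if P x then 1 else 0)"
  by (simp add: sum.If_cases Int_def conj_commute)

lemma sum_card_filter_tuples_Suc:
  assumes "finite A"
  shows "(\<Sum>xs\<in>tuples A m. card {x\<in>A. P (x # xs)}) = card {xs\<in>tuples A (Suc m). P xs}"
proof -
  have "(\<Sum>xs\<in>tuples A m. card {x\<in>A. P (x # xs)}) = (\<Sum>x\<in>A. card {xs\<in>tuples A m. P (x # xs)})"
    using assms finite_tuples[OF assms] by (rule sum_card_filter_swap[symmetric])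
  also have "\<dots> = (\<Sum>x\<in>A. \<Sum>xs\<in>tuples A m. if P (x # xs) then 1 else 0)"
    by (intro sum.cong refl card_filter_eq_sum finite_tuples assms)
  also have "\<dots> = (\<Sum>xs\<in>tuples A (Suc m). if P xs then 1 else 0)"
    by (rule sum_tuples_Suc[OF assms, symmetric])
  also have "\<dots> = card {xs\<in>tuples A (Suc m). P xs}"
    by (intro card_filter_eq_sum[symmetric] finite_tuples assms)
  finally show ?thesis .
qed

lemma card_le_twice_mean:
  fixes f :: "'a \<Rightarrow> real" and m :: real
  assumes A: "finite A" and nonneg: "\<forall>a\<in>A. 0 \<le> f a"
    and sum: "sum f A \<le> m * card A" and m: "0 < m"
  shows "card A / 2 \<le> card {a\<in>A. f a \<le> 2 * m}"
proof -
  define B where "B = {a\<in>A. 2 * m < f a}"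
  have "B \<subseteq> A" by (auto simp: B_def)
  have "real (card B) * (2 * m) = (\<Sum>a\<in>B. 2 * m)" by simp
  also have "\<dots> \<le> sum f B" by (rule sum_mono) (simp add: B_def less_imp_le)
  also have "\<dots> \<le> sum f A" using A \<open>B \<subseteq> A\<close> nonneg by (intro sum_mono2) auto
  finally have "real (card B * 2) * m \<le> real (card A) * m"
    using sum by (simp add: algebra_simps)
  then have "card B * 2 \<le> card A"
    using m by (metis mult_le_cancel_right_pos of_nat_le_iff)
  moreover have "card (A - B) = card A - card B"
    using A \<open>B \<subseteq> A\<close> by (simp add: card_Diff_subset finite_subset)
  ultimately have "card A \<le> card (A - B) * 2"
    by linarith
  moreover have "{a\<in>A. f a \<le> 2 * m} = A - B"
    by (auto simp: B_def)
  ultimately show ?thesis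
    by simp
qed

lemma card_ge_half_mean:
  fixes f :: "'a \<Rightarrow> real" and c K N :: real
  assumes P: "finite P" and bounded: "\<forall>p\<in>P. f p \<le> N" and sum: "c * K * N \<le> sum f P"
    and card: "card P \<le> K" and N: "0 < N" and c: "0 \<le> c"
  shows "c / 2 * K \<le> card {p\<in>P. c / 2 * N \<le> f p}"
proof -
  define B where "B = {p\<in>P. c / 2 * N \<le> f p}"
  have "B \<subseteq> P" by (auto simp: B_def)
  have "sum f P = sum f (P - B) + sum f B"
    by (rule sum.subset_diff[OF \<open>B \<subseteq> P\<close> P])
  also have "\<dots> \<le> (\<Sum>p\<in>P - B. c / 2 * N) + (\<Sum>p\<in>B. N)"
    using bounded \<open>B \<subseteq> P\<close> by (intro add_mono sum_mono) (auto simp: B_def)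
  also have "\<dots> = card (P - B) * (c / 2 * N) + card B * N"
    by simp
  also have "\<dots> \<le> K * (c / 2 * N) + card B * N"
    using card card_mono[OF P, of "P - B"] c N by (intro add_right_mono mult_right_mono) auto
  finally have "c / 2 * K * N \<le> card B * N"
    using sum by (simp add: algebra_simps)
  then show ?thesis using N unfolding B_def by simp
qed

lemma card_mult_le_sum:
  fixes f :: "'a \<Rightarrow> real" and m :: real
  assumes "finite A" "\<forall>a\<in>A. P a \<longrightarrow> t \<le> f a" "\<forall>a\<in>A. 0 \<le> f a" "m \<le> card {a\<in>A. P a}" "0 \<le> t"
  shows "m * t \<le> sum f A"
proof -
  have "m * t \<le> card {a\<in>A. P a} * t"
    using assms(4,5) by (rule mult_right_mono)
  also have "\<dots> = (\<Sum>a\<in>{a\<in>A. P a}. t)"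
    by simp
  also have "\<dots> \<le> (\<Sum>a\<in>{a\<in>A. P a}. f a)"
    using assms(2) by (intro sum_mono) auto
  also have "\<dots> \<le> sum f A"
    using assms(1,3) by (intro sum_mono2) auto
  finally show ?thesis .
qed

text \<open>Each of the h - 1 greedy steps of the removal argument multiplies the bound on the number of
  incompatible boxes by 2h; removal_eps is chosen so that at the end at most half are left.\<close>

definition removal_eps :: "nat \<Rightarrow> real" where
  "removal_eps h = 1 / (2 * (2 * real h) ^ (h - 1))"

lemma removal_eps_pos: "0 < removal_eps h"
  by (cases h) (auto simp: removal_eps_def)

lemma removal_eps_le_half: "removal_eps h \<le> 1 / 2"
proof -
  have "1 \<le> (2 * real h) ^ (h - 1)"
    using one_le_power[of "2 * real h" "h - 1"] by (cases "h = 0") auto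
  then show ?thesis
    by (simp add: removal_eps_def field_simps)
qed

text \<open>A c_j/2-fraction of the pairs counted at stage j has at least c_j N/2 compatible boxes, and each
  of these contributes at least eps (c_j N/2)^h bad tuples to stage j + 1.\<close>

fun density_seq :: "real \<Rightarrow> nat \<Rightarrow> nat \<Rightarrow> real" where
  "density_seq \<alpha> h 0 = \<alpha> / real h ^ h"
| "density_seq \<alpha> h (Suc j) =
     density_seq \<alpha> h j * removal_eps h * (density_seq \<alpha> h j / 2) ^ h / 2"

lemma density_seq_bounds:
  assumes "0 < \<alpha>" "\<alpha> \<le> 1"
  shows "0 < density_seq \<alpha> h j \<and> density_seq \<alpha> h j \<le> 1"
proof (induction j)
  case 0
  have "1 \<le> real h ^ h"
    using one_le_power[of "real h" h] by (cases "h = 0") auto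
  then show ?case
    using assms by (auto simp: divide_le_eq_1 intro!: divide_pos_pos)
next
  case (Suc j)
  let ?c = "density_seq \<alpha> h j"
  have "(?c / 2) ^ h \<le> 1"
    using Suc.IH by (auto intro: power_le_one)
  then have "?c * removal_eps h * (?c / 2) ^ h / 2 \<le> 1 * 1 * 1 / 2"
    using Suc.IH removal_eps_pos[of h] removal_eps_le_half[of h]
    by (intro divide_right_mono mult_mono) auto
  then show ?case
    using Suc.IH removal_eps_pos[of h] by simp
qed

lemma density_seq_Suc_le_half:
  assumes "0 < \<alpha>" "\<alpha> \<le> 1"
  shows "density_seq \<alpha> h (Suc j) \<le> density_seq \<alpha> h j / 2"
proof -
  let ?c = "density_seq \<alpha> h j"
  have c: "0 < ?c" "?c \<le> 1"
    using density_seq_bounds[OF assms] by auto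
  have "removal_eps h * (?c / 2) ^ h \<le> 1 * 1"
    using c removal_eps_pos[of h] removal_eps_le_half[of h]
    by (intro mult_mono power_le_one) auto
  then have "?c * (removal_eps h * (?c / 2) ^ h) \<le> ?c * 1"
    using c by (intro mult_left_mono) auto
  then show ?thesis
    by (simp add: mult.assoc)
qed

lemma density_seq_antimono:
  assumes "0 < \<alpha>" "\<alpha> \<le> 1" "j \<le> k"
  shows "density_seq \<alpha> h k \<le> density_seq \<alpha> h j"
proof (rule lift_Suc_antimono_le[OF _ assms(3)])
  show "density_seq \<alpha> h (Suc i) \<le> density_seq \<alpha> h i" for i
    using density_seq_Suc_le_half[OF assms(1,2), of h i] density_seq_bounds[OF assms(1,2), of h i]
    by linarith
qed

definition frac_helly_beta :: "real \<Rightarrow> nat \<Rightarrow> real" where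
  "frac_helly_beta \<alpha> h = density_seq \<alpha> h (h - 1) / 2"

lemma frac_helly_beta_bounds:
  assumes "0 < \<alpha>" "\<alpha> \<le> 1"
  shows "0 < frac_helly_beta \<alpha> h" "frac_helly_beta \<alpha> h < 1" "frac_helly_beta \<alpha> h * h \<le> 1"
proof -
  show "0 < frac_helly_beta \<alpha> h" "frac_helly_beta \<alpha> h < 1"
    using density_seq_bounds[OF assms, of h "h - 1"] by (auto simp: frac_helly_beta_def)
  have "real h \<le> real h ^ h"
    by (cases h) (auto intro: self_le_power)
  then have "density_seq \<alpha> h 0 * h \<le> 1"
    using assms by (cases "h = 0") (auto simp: field_simps intro: order_trans[of _ "real h"])
  moreover have "frac_helly_beta \<alpha> h \<le> density_seq \<alpha> h 0"
    using density_seq_antimono[OF assms, of 0 "h - 1" h] density_seq_bounds[OF assms, of h "h - 1"]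
    unfolding frac_helly_beta_def by linarith
  ultimately show "frac_helly_beta \<alpha> h * h \<le> 1"
    using mult_right_mono[of "frac_helly_beta \<alpha> h" "density_seq \<alpha> h 0" "real h"] by simp
qed

section \<open>Colorful Helly implies fractional Helly\<close>

locale colorful_helly =
  fixes V :: "'a set" and good :: "'a set \<Rightarrow> bool" and h :: nat
  assumes finite_V: "finite V"
    and h_pos: "0 < h"
    and colorful: "\<And>Fs. \<forall>i<h. Fs i \<subseteq> V \<Longrightarrow> \<forall>g. (\<forall>i<h. g i \<in> Fs i) \<longrightarrow> good (g ` {..<h})
      \<Longrightarrow> \<exists>i<h. good (Fs i)"
begin

lemma good_empty: "good {}"
  using colorful[of "\<lambda>_. {}"] h_pos by auto

definition bad_tuples :: "'a set \<Rightarrow> 'a list set" where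
  "bad_tuples Y = {t\<in>tuples Y h. \<not> good (set t)}"

lemma finite_bad_tuples: "finite Y \<Longrightarrow> finite (bad_tuples Y)"
  unfolding bad_tuples_def by (simp add: finite_tuples)

lemma bad_tuples_restrict: "Y \<subseteq> V \<Longrightarrow> {t\<in>bad_tuples V. set t \<subseteq> Y} = bad_tuples Y"
  unfolding bad_tuples_def tuples_def by auto

lemma card_bad_tuples_le: "finite Y \<Longrightarrow> card (bad_tuples Y) \<le> card Y ^ h"
  unfolding bad_tuples_def using card_mono[OF finite_tuples, of Y "{t\<in>tuples Y h. \<not> good (set t)}" h]
  by (simp add: card_tuples)

lemma bad_tuples_mono: "Y \<subseteq> Y' \<Longrightarrow> bad_tuples Y \<subseteq> bad_tuples Y'"
  unfolding bad_tuples_def tuples_def by auto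

lemma good_if_no_bad_tuples:
  assumes "Z \<subseteq> V" and "bad_tuples Z = {}"
  shows "good Z"
proof -
  have "good (g ` {..<h})" if "\<forall>i<h. g i \<in> Z" for g
  proof -
    have "map g [0..<h] \<in> tuples Z h"
      using that by (auto simp: tuples_def)
    then show ?thesis
      using assms(2) by (auto simp: bad_tuples_def atLeast0LessThan)
  qed
  then show ?thesis
    using colorful[of "\<lambda>_. Z"] assms(1) by auto
qed

fun transversals_good :: "'a list list \<Rightarrow> 'a set \<Rightarrow> bool" where
  "transversals_good [] U = good U"
| "transversals_good (T # Ts) U = (\<forall>a\<in>set T. transversals_good Ts (insert a U))"

lemma transversals_goodD:
  assumes "transversals_good Ts U" and "\<And>i. i < length Ts \<Longrightarrow> g i \<in> set (Ts ! i)"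
  shows "good (g ` {..<length Ts} \<union> U)"
  using assms
proof (induction Ts arbitrary: U g)
  case Nil
  then show ?case by simp
next
  case (Cons T Ts)
  have "g 0 \<in> set T"
    using Cons.prems(2)[of 0] by simp
  moreover have "(g \<circ> Suc) i \<in> set (Ts ! i)" if "i < length Ts" for i
    using Cons.prems(2)[of "Suc i"] that by simp
  ultimately have "good ((g \<circ> Suc) ` {..<length Ts} \<union> insert (g 0) U)"
    using Cons.prems(1) by (intro Cons.IH) auto
  moreover have "(g \<circ> Suc) ` {..<length Ts} \<union> insert (g 0) U = g ` {..<length (T # Ts)} \<union> U"
    by (auto simp: lessThan_Suc_eq_insert_0 image_image)
  ultimately show ?case by simp
qed

definition compatible :: "'a set \<Rightarrow> 'a list list \<Rightarrow> 'a list \<Rightarrow> 'a set" where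
  "compatible W Ts s = {v\<in>W. transversals_good Ts (insert v (set s))}"

lemma compatible_subset: "compatible W Ts s \<subseteq> W"
  unfolding compatible_def by auto

lemma compatible_Cons:
  "set T \<subseteq> W \<Longrightarrow> compatible W (T # Ts) s = {b\<in>W. set T \<subseteq> compatible W Ts (b # s)}"
  unfolding compatible_def by (auto simp: insert_commute)

lemma good_compatible:
  assumes "W \<subseteq> V" and Ts: "Ts \<in> tuples (bad_tuples V) (h - 1)"
  shows "good (compatible W Ts [])"
proof -
  have Ts_bad: "set (Ts ! i) \<subseteq> V \<and> \<not> good (set (Ts ! i))" if "i < h - 1" for i
  proof -
    have "Ts ! i \<in> set Ts"
      using Ts that by (simp add: tuples_def)
    then show ?thesis
      using Ts by (auto simp: tuples_def bad_tuples_def)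
  qed
  define Fs where "Fs i = (if i < h - 1 then set (Ts ! i) else compatible W Ts [])" for i
  have "Fs i \<subseteq> V" if "i < h" for i
    using Ts_bad \<open>W \<subseteq> V\<close> compatible_subset[of W Ts "[]"] by (auto simp: Fs_def)
  moreover have "good (g ` {..<h})" if g: "\<forall>i<h. g i \<in> Fs i" for g
  proof -
    have "g (h - 1) \<in> compatible W Ts []"
      using g[rule_format, of "h - 1"] h_pos by (simp add: Fs_def)
    then have "transversals_good Ts {g (h - 1)}"
      by (simp add: compatible_def)
    moreover have "g i \<in> set (Ts ! i)" if "i < length Ts" for i
      using g[rule_format, of i] Ts that by (simp add: Fs_def tuples_def)
    ultimately have "good (g ` {..<length Ts} \<union> {g (h - 1)})"
      by (rule transversals_goodD)
    moreover have "length Ts = h - 1"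
      using Ts by (simp add: tuples_def)
    moreover have "{..<h} = insert (h - 1) {..<h - 1}"
      using h_pos by auto
    ultimately show ?thesis
      by (metis image_insert Un_insert_right sup_bot.right_neutral)
  qed
  ultimately obtain i where "i < h" "good (Fs i)"
    using colorful[of Fs] by blast
  then show ?thesis
    using Ts_bad by (auto simp: Fs_def split: if_splits)
qed

definition defect :: "'a set \<Rightarrow> 'a list list \<Rightarrow> nat \<Rightarrow> nat" where
  "defect Y Ts r = (\<Sum>s\<in>tuples Y r. card (Y - compatible Y Ts s))"

lemma defect_Nil: "finite Y \<Longrightarrow> defect Y [] (h - 1) = card (bad_tuples Y)"
proof -
  assume "finite Y"
  have "defect Y [] (h - 1) = (\<Sum>s\<in>tuples Y (h - 1). card {v\<in>Y. \<not> good (set (v # s))})"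
    unfolding defect_def compatible_def by (intro sum.cong refl arg_cong[where f=card]) auto
  also have "\<dots> = card {t\<in>tuples Y (Suc (h - 1)). \<not> good (set t)}"
    using \<open>finite Y\<close> by (rule sum_card_filter_tuples_Suc)
  finally show ?thesis
    using h_pos by (simp add: bad_tuples_def)
qed

lemma sum_card_not_compatible:
  "finite Y \<Longrightarrow> (\<Sum>a\<in>Y. card {s\<in>tuples Y r. a \<notin> compatible Y Ts s}) = defect Y Ts r"
  unfolding defect_def
  by (subst sum_card_filter_swap) (auto simp: finite_tuples intro!: sum.cong arg_cong[where f=card])

lemma defect_Cons_le:
  assumes "finite Y" "set T \<subseteq> Y"
  shows "defect Y (T # Ts) r \<le> (\<Sum>a\<in>set T. card {s\<in>tuples Y (Suc r). a \<notin> compatible Y Ts s})"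
proof -
  have "card (Y - compatible Y (T # Ts) s) \<le> (\<Sum>a\<in>set T. card {b\<in>Y. a \<notin> compatible Y Ts (b # s)})"
    for s
  proof -
    have "Y - compatible Y (T # Ts) s = (\<Union>a\<in>set T. {b\<in>Y. a \<notin> compatible Y Ts (b # s)})"
      using assms(2) compatible_Cons by auto
    then show ?thesis
      by (simp add: card_UN_le)
  qed
  then have "defect Y (T # Ts) r
      \<le> (\<Sum>s\<in>tuples Y r. \<Sum>a\<in>set T. card {b\<in>Y. a \<notin> compatible Y Ts (b # s)})"
    unfolding defect_def by (rule sum_mono)
  also have "\<dots> = (\<Sum>a\<in>set T. \<Sum>s\<in>tuples Y r. card {b\<in>Y. a \<notin> compatible Y Ts (b # s)})"
    by (rule sum.swap)
  also have "\<dots> = (\<Sum>a\<in>set T. card {s\<in>tuples Y (Suc r). a \<notin> compatible Y Ts s})"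
    by (rule sum.cong[OF refl], rule sum_card_filter_tuples_Suc[OF assms(1)])
  finally show ?thesis .
qed

lemma ex_bad_tuple_defect_Cons_le:
  fixes \<kappa> :: real
  assumes "Y \<subseteq> V" and no_large: "\<forall>Z\<subseteq>Y. good Z \<longrightarrow> 2 * card Z < card Y"
    and defect: "defect Y Ts (Suc r) \<le> \<kappa> * card Y ^ Suc (Suc r)" and "0 < \<kappa>"
  shows "\<exists>T\<in>bad_tuples Y. defect Y (T # Ts) r \<le> 2 * real h * \<kappa> * card Y ^ Suc r"
proof -
  have "finite Y"
    using \<open>Y \<subseteq> V\<close> finite_V finite_subset by blast
  define M where "M = real (card Y)"
  have "0 < M"
    using no_large[rule_format, of "{}"] good_empty by (simp add: M_def)
  define miss where "miss a = card {s\<in>tuples Y (Suc r). a \<notin> compatible Y Ts s}" for a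
  define L where "L = {a\<in>Y. real (miss a) \<le> 2 * (\<kappa> * M ^ Suc r)}"
  have "(\<Sum>a\<in>Y. real (miss a)) \<le> \<kappa> * M ^ Suc r * card Y"
    using defect sum_card_not_compatible[OF \<open>finite Y\<close>, of "Suc r" Ts]
    by (simp add: miss_def M_def algebra_simps flip: of_nat_sum)
  then have "card Y / 2 \<le> card L"
    unfolding L_def using \<open>finite Y\<close> \<open>0 < \<kappa>\<close> \<open>0 < M\<close> by (intro card_le_twice_mean) auto
  then have "card Y \<le> 2 * card L"
    by linarith
  moreover have "L \<subseteq> Y"
    by (auto simp: L_def)
  ultimately have "\<not> good L"
    using no_large leD by blast
  then obtain T where T: "T \<in> bad_tuples L"
    using good_if_no_bad_tuples \<open>L \<subseteq> Y\<close> \<open>Y \<subseteq> V\<close> by blast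
  then have "set T \<subseteq> L" "card (set T) \<le> h"
    using card_length[of T] by (auto simp: bad_tuples_def tuples_def)
  have "real (defect Y (T # Ts) r) \<le> (\<Sum>a\<in>set T. real (miss a))"
    using defect_Cons_le[OF \<open>finite Y\<close>, of T Ts r] \<open>set T \<subseteq> L\<close> \<open>L \<subseteq> Y\<close>
    unfolding miss_def by (simp flip: of_nat_sum)
  also have "\<dots> \<le> (\<Sum>a\<in>set T. 2 * (\<kappa> * M ^ Suc r))"
    using \<open>set T \<subseteq> L\<close> by (intro sum_mono) (auto simp: L_def)
  also have "\<dots> \<le> h * (2 * (\<kappa> * M ^ Suc r))"
    using \<open>card (set T) \<le> h\<close> \<open>0 < \<kappa>\<close> \<open>0 < M\<close> by (simp add: mult_right_mono)
  finally have "defect Y (T # Ts) r \<le> 2 * real h * \<kappa> * card Y ^ Suc r"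
    by (simp add: M_def algebra_simps)
  then show ?thesis
    using T bad_tuples_mono[OF \<open>L \<subseteq> Y\<close>] by blast
qed

lemma ex_bad_tuples_defect_le:
  assumes "Y \<subseteq> V" and no_large: "\<forall>Z\<subseteq>Y. good Z \<longrightarrow> 2 * card Z < card Y"
    and few_bad: "card (bad_tuples Y) \<le> removal_eps h * card Y ^ h"
  shows "j \<le> h - 1 \<Longrightarrow> \<exists>Ts\<in>tuples (bad_tuples Y) j.
    defect Y Ts (h - 1 - j) \<le> (2 * real h) ^ j * removal_eps h * card Y ^ (h - j)"
proof (induction j)
  case 0
  have "finite Y"
    using \<open>Y \<subseteq> V\<close> finite_V finite_subset by blast
  then show ?case
    using few_bad defect_Nil[OF \<open>finite Y\<close>] by (intro bexI[of _ "[]"]) auto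
next
  case (Suc j)
  then obtain Ts where Ts: "Ts \<in> tuples (bad_tuples Y) j"
    and defect: "defect Y Ts (h - 1 - j) \<le> (2 * real h) ^ j * removal_eps h * card Y ^ (h - j)"
    by auto
  define r where "r = h - 1 - Suc j"
  have r: "h - 1 - j = Suc r" "h - j = Suc (Suc r)" "h - Suc j = Suc r" "h - 1 - Suc j = r"
    using Suc.prems by (auto simp: r_def)
  define \<kappa> where "\<kappa> = (2 * real h) ^ j * removal_eps h"
  have "defect Y Ts (Suc r) \<le> \<kappa> * card Y ^ Suc (Suc r)"
    using defect r by (simp add: \<kappa>_def)
  moreover have "0 < \<kappa>"
    using h_pos removal_eps_pos by (simp add: \<kappa>_def)
  ultimately obtain T where "T \<in> bad_tuples Y"
    and "defect Y (T # Ts) r \<le> 2 * real h * \<kappa> * card Y ^ Suc r"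
    using ex_bad_tuple_defect_Cons_le[OF \<open>Y \<subseteq> V\<close> no_large] by blast
  moreover have "2 * real h * \<kappa> * card Y ^ Suc r
      = (2 * real h) ^ Suc j * removal_eps h * card Y ^ (h - Suc j)"
    using r by (simp add: \<kappa>_def)
  moreover have "T # Ts \<in> tuples (bad_tuples Y) (Suc j)"
    using Ts \<open>T \<in> bad_tuples Y\<close> by (simp add: tuples_def)
  ultimately show ?case
    using r by metis
qed

lemma large_good_subset_if_few_bad_tuples:
  assumes "Y \<subseteq> V" and few_bad: "card (bad_tuples Y) \<le> removal_eps h * card Y ^ h"
  shows "\<exists>Z\<subseteq>Y. good Z \<and> card Y \<le> 2 * card Z"
proof (rule ccontr)
  assume "\<not> ?thesis"
  then have no_large: "\<forall>Z\<subseteq>Y. good Z \<longrightarrow> 2 * card Z < card Y"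
    by auto
  have "h - (h - 1) = 1"
    using h_pos by simp
  then obtain Ts where Ts: "Ts \<in> tuples (bad_tuples Y) (h - 1)"
    and defect: "defect Y Ts 0 \<le> (2 * real h) ^ (h - 1) * removal_eps h * card Y"
    using ex_bad_tuples_defect_le[OF assms(1) no_large few_bad, of "h - 1"] h_pos by auto
  have "(2 * real h) ^ (h - 1) * removal_eps h = 1 / 2"
    using h_pos by (simp add: removal_eps_def)
  with defect have "real (defect Y Ts 0) \<le> 1 / 2 * card Y"
    by (simp only:)
  then have "2 * card (Y - compatible Y Ts []) \<le> card Y"
    by (simp add: defect_def)
  moreover have "good (compatible Y Ts [])"
    using Ts tuples_mono[OF bad_tuples_mono[OF \<open>Y \<subseteq> V\<close>]] \<open>Y \<subseteq> V\<close>
    by (intro good_compatible) auto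
  moreover have "card Y = card (compatible Y Ts []) + card (Y - compatible Y Ts [])"
    using finite_subset[OF \<open>Y \<subseteq> V\<close> finite_V] compatible_subset[of Y Ts "[]"]
    by (simp add: card_Diff_subset card_mono finite_subset)
  moreover have "2 * card (compatible Y Ts []) < card Y"
    using no_large compatible_subset \<open>good (compatible Y Ts [])\<close> by simp
  ultimately show False
    by linarith
qed

lemma many_bad_tuples_if_no_large_good:
  fixes b t :: real
  assumes no_large: "\<forall>Z\<subseteq>V. good Z \<longrightarrow> card Z < b" and "Y \<subseteq> V" and "2 * b \<le> t" and "t \<le> card Y"
  shows "removal_eps h * t ^ h \<le> card (bad_tuples Y)"
proof -
  have "removal_eps h * card Y ^ h \<le> card (bad_tuples Y)"
  proof (rule ccontr)
    assume "\<not> ?thesis"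
    then obtain Z where "Z \<subseteq> Y" "good Z" "card Y \<le> 2 * card Z"
      using large_good_subset_if_few_bad_tuples[OF \<open>Y \<subseteq> V\<close>] by (meson less_imp_le not_le)
    moreover from this have "card Z < b"
      using no_large \<open>Y \<subseteq> V\<close> by auto
    ultimately show False
      using assms(3,4) by linarith
  qed
  moreover have "0 < b"
    using no_large[rule_format, of "{}"] good_empty by simp
  then have "removal_eps h * t ^ h \<le> removal_eps h * card Y ^ h"
    using power_mono[of t "card Y" h] assms(3,4) removal_eps_pos[of h] by (intro mult_left_mono) auto
  ultimately show ?thesis
    by linarith
qed

definition compatible_count :: "nat \<Rightarrow> nat" where
  "compatible_count j =
     (\<Sum>Ts\<in>tuples (bad_tuples V) j. \<Sum>s\<in>tuples V (h - 1 - j). card (compatible V Ts s))"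

lemma compatible_count_0: "compatible_count 0 = card {t\<in>tuples V h. good (set t)}"
proof -
  have "compatible_count 0 = (\<Sum>s\<in>tuples V (h - 1). card {v\<in>V. good (set (v # s))})"
    by (simp add: compatible_count_def compatible_def)
  also have "\<dots> = card {t\<in>tuples V (Suc (h - 1)). good (set t)}"
    using finite_V by (rule sum_card_filter_tuples_Suc)
  finally show ?thesis
    using h_pos by simp
qed

lemma compatible_count_Suc:
  assumes "j < h - 1"
  shows "compatible_count (Suc j) = (\<Sum>Ts\<in>tuples (bad_tuples V) j. \<Sum>s\<in>tuples V (h - 1 - j).
    card (bad_tuples (compatible V Ts s)))"
proof -
  define r where "r = h - 1 - Suc j"
  have r: "h - 1 - j = Suc r"
    using assms by (simp add: r_def)
  let ?B = "bad_tuples V"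
  have "compatible_count (Suc j) = (\<Sum>T\<in>?B. \<Sum>Ts\<in>tuples ?B j. \<Sum>s\<in>tuples V r.
      card {b\<in>V. set T \<subseteq> compatible V Ts (b # s)})"
    unfolding compatible_count_def r_def sum_tuples_Suc[OF finite_bad_tuples[OF finite_V]]
    by (intro sum.cong refl arg_cong[where f=card] compatible_Cons)
      (auto simp: bad_tuples_def tuples_def)
  also have "\<dots> = (\<Sum>Ts\<in>tuples ?B j. \<Sum>T\<in>?B. \<Sum>s\<in>tuples V r.
      card {b\<in>V. set T \<subseteq> compatible V Ts (b # s)})"
    by (rule sum.swap)
  also have "\<dots> = (\<Sum>Ts\<in>tuples ?B j. \<Sum>s\<in>tuples V r. \<Sum>T\<in>?B.
      card {b\<in>V. set T \<subseteq> compatible V Ts (b # s)})"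
    by (rule sum.cong[OF refl], rule sum.swap)
  also have "\<dots> = (\<Sum>Ts\<in>tuples ?B j. \<Sum>s\<in>tuples V r. \<Sum>b\<in>V.
      card {T\<in>?B. set T \<subseteq> compatible V Ts (b # s)})"
    by (intro sum.cong refl sum_card_filter_swap finite_bad_tuples finite_V)
  also have "\<dots> = (\<Sum>Ts\<in>tuples ?B j. \<Sum>b\<in>V. \<Sum>s\<in>tuples V r.
      card (bad_tuples (compatible V Ts (b # s))))"
    by (intro sum.cong refl, subst sum.swap, intro sum.cong refl arg_cong[where f=card]
        bad_tuples_restrict compatible_subset[THEN order_trans] order_refl)
  also have "\<dots> = (\<Sum>Ts\<in>tuples ?B j. \<Sum>s\<in>tuples V (h - 1 - j). card (bad_tuples (compatible V Ts s)))"
    unfolding r by (intro sum.cong refl sum_tuples_Suc[symmetric] finite_V)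
  finally show ?thesis .
qed

lemma card_good_sets_le_good_tuples:
  "card {S. S \<subseteq> V \<and> card S = h \<and> good S} \<le> card {t\<in>tuples V h. good (set t)}"
proof -
  let ?T = "{t\<in>tuples V h. good (set t)}"
  have "finite ?T"
    using finite_tuples[OF finite_V] by simp
  have "{S. S \<subseteq> V \<and> card S = h \<and> good S} \<subseteq> set ` ?T"
  proof
    fix S assume S: "S \<in> {S. S \<subseteq> V \<and> card S = h \<and> good S}"
    then have "finite S"
      using finite_subset finite_V by auto
    then obtain t where "set t = S" "distinct t"
      using finite_distinct_list by blast
    then show "S \<in> set ` ?T"
      using S distinct_card[of t] by (auto simp: tuples_def)
  qed
  then have "card {S. S \<subseteq> V \<and> card S = h \<and> good S} \<le> card (set ` ?T)"
    using \<open>finite ?T\<close> by (intro card_mono) auto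
  also have "\<dots> \<le> card ?T"
    using \<open>finite ?T\<close> by (rule card_image_le)
  finally show ?thesis .
qed

lemma compatible_count_0_ge:
  fixes \<alpha> :: real
  assumes "h \<le> card V" and "0 \<le> \<alpha>"
    and density: "\<alpha> * (card V choose h) \<le> card {S. S \<subseteq> V \<and> card S = h \<and> good S}"
  shows "density_seq \<alpha> h 0 * card V ^ h \<le> compatible_count 0"
proof -
  have "density_seq \<alpha> h 0 * card V ^ h = \<alpha> * (card V / h) ^ h"
    by (simp add: power_divide)
  also have "\<dots> \<le> \<alpha> * (card V choose h)"
    using binomial_ge_n_over_k_pow_k[OF \<open>h \<le> card V\<close>] \<open>0 \<le> \<alpha>\<close> by (intro mult_left_mono) auto
  also have "\<dots> \<le> card {S. S \<subseteq> V \<and> card S = h \<and> good S}"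
    by (rule density)
  also have "\<dots> \<le> compatible_count 0"
    unfolding compatible_count_0 using card_good_sets_le_good_tuples by (rule of_nat_mono)
  finally show ?thesis .
qed

lemma compatible_count_last_le:
  fixes b :: real
  assumes "\<forall>Z\<subseteq>V. good Z \<longrightarrow> card Z \<le> b"
  shows "compatible_count (h - 1) \<le> card V ^ (h * (h - 1)) * b"
proof -
  have "0 \<le> b"
    using assms[rule_format, of "{}"] good_empty by simp
  have "compatible_count (h - 1) = (\<Sum>Ts\<in>tuples (bad_tuples V) (h - 1). real (card (compatible V Ts [])))"
    by (simp add: compatible_count_def)
  also have "\<dots> \<le> (\<Sum>Ts\<in>tuples (bad_tuples V) (h - 1). b)"
  proof (rule sum_mono)
    fix Ts assume "Ts \<in> tuples (bad_tuples V) (h - 1)"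
    then have "good (compatible V Ts [])"
      by (rule good_compatible[OF order_refl])
    then show "real (card (compatible V Ts [])) \<le> b"
      using assms compatible_subset by simp
  qed
  also have "\<dots> = card (bad_tuples V) ^ (h - 1) * b"
    by (simp add: card_tuples finite_bad_tuples finite_V)
  also have "\<dots> \<le> (card V ^ h) ^ (h - 1) * b"
    using card_bad_tuples_le[OF finite_V] \<open>0 \<le> b\<close>
    by (intro mult_right_mono) (auto simp flip: of_nat_power intro: power_mono)
  finally show ?thesis
    by (simp add: power_mult)
qed

lemma card_bad_tuple_pairs_le: "card (tuples (bad_tuples V) j \<times> tuples V r) \<le> card V ^ (h * j + r)"
proof -
  have "card (tuples (bad_tuples V) j \<times> tuples V r) = card (bad_tuples V) ^ j * card V ^ r"
    by (simp add: card_cartesian_product card_tuples finite_bad_tuples finite_V)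
  also have "\<dots> \<le> (card V ^ h) ^ j * card V ^ r"
    by (intro mult_right_mono power_mono card_bad_tuples_le finite_V) simp_all
  finally show ?thesis
    by (simp add: power_mult power_add)
qed

lemma compatible_count_Suc_ge:
  fixes b c :: real
  assumes no_large: "\<forall>Z\<subseteq>V. good Z \<longrightarrow> card Z < b" and "4 * b \<le> c * card V"
    and "j < h - 1" and "0 < c" and count: "c * card V ^ (h * j + (h - j)) \<le> compatible_count j"
  shows "c * removal_eps h * (c / 2) ^ h / 2 * card V ^ (h * Suc j + (h - Suc j)) \<le> compatible_count (Suc j)"
proof (cases "V = {}")
  case True
  then show ?thesis
    using h_pos by (simp add: power_0_left)
next
  case False
  define N where "N = real (card V)"
  have "0 < N"
    using False finite_V by (simp add: N_def card_gt_0_iff)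
  define r where "r = h - 1 - j"
  have r: "h - j = Suc r" "h - Suc j = r"
    using \<open>j < h - 1\<close> by (auto simp: r_def)
  define P where "P = tuples (bad_tuples V) j \<times> tuples V r"
  define X where "X p = compatible V (fst p) (snd p)" for p
  define K where "K = N ^ (h * j + r)"
  have "finite P"
    by (simp add: P_def finite_tuples finite_bad_tuples finite_V)
  have "card P \<le> K"
    unfolding K_def N_def P_def by (metis card_bad_tuple_pairs_le of_nat_le_iff of_nat_power)
  have "compatible_count j = (\<Sum>p\<in>P. card (X p))"
    by (simp add: compatible_count_def P_def X_def r_def sum.cartesian_product case_prod_beta)
  moreover have "K * N = N ^ (h * j + (h - j))"
    by (simp add: K_def r(1))
  ultimately have "c * K * N \<le> (\<Sum>p\<in>P. real (card (X p)))"
    using count by (simp add: N_def mult.assoc)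
  then have "c / 2 * K \<le> card {p\<in>P. c / 2 * N \<le> card (X p)}"
    using \<open>finite P\<close> \<open>card P \<le> K\<close> \<open>0 < N\<close> \<open>0 < c\<close> compatible_subset
    by (intro card_ge_half_mean) (auto simp: X_def N_def card_mono finite_V)
  moreover have "removal_eps h * (c / 2 * N) ^ h \<le> card (bad_tuples (X p))"
    if "c / 2 * N \<le> card (X p)" for p
    using that \<open>4 * b \<le> c * card V\<close> compatible_subset
    by (intro many_bad_tuples_if_no_large_good[OF no_large]) (auto simp: X_def N_def)
  ultimately have "c / 2 * K * (removal_eps h * (c / 2 * N) ^ h)
      \<le> (\<Sum>p\<in>P. real (card (bad_tuples (X p))))"
    using \<open>finite P\<close> removal_eps_pos[of h] \<open>0 < c\<close> \<open>0 < N\<close>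
    by (intro card_mult_le_sum) auto
  also have "\<dots> = compatible_count (Suc j)"
    using \<open>j < h - 1\<close> by (simp add: compatible_count_Suc P_def X_def r_def sum.cartesian_product
        case_prod_beta flip: of_nat_sum)
  finally show ?thesis
    by (simp add: r(2) K_def N_def power_add power_mult_distrib field_simps)
qed

lemma compatible_count_ge:
  fixes \<alpha> :: real
  assumes "h \<le> card V" and \<alpha>: "0 < \<alpha>" "\<alpha> \<le> 1"
    and density: "\<alpha> * (card V choose h) \<le> card {S. S \<subseteq> V \<and> card S = h \<and> good S}"
    and no_large: "\<forall>Z\<subseteq>V. good Z \<longrightarrow> card Z < frac_helly_beta \<alpha> h * card V"
  shows "j \<le> h - 1 \<Longrightarrow> density_seq \<alpha> h j * card V ^ (h * j + (h - j)) \<le> compatible_count j"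
proof (induction j)
  case 0
  then show ?case
    using compatible_count_0_ge[OF \<open>h \<le> card V\<close> _ density] \<alpha> by simp
next
  case (Suc j)
  let ?c = "density_seq \<alpha> h j"
  have "4 * frac_helly_beta \<alpha> h \<le> ?c"
    using density_seq_antimono[OF \<alpha> Suc.prems, of h] density_seq_Suc_le_half[OF \<alpha>, of h j]
    unfolding frac_helly_beta_def by linarith
  then have "4 * (frac_helly_beta \<alpha> h * card V) \<le> ?c * card V"
    using mult_right_mono[of "4 * frac_helly_beta \<alpha> h" ?c "real (card V)"] by simp
  then have "?c * removal_eps h * (?c / 2) ^ h / 2 * card V ^ (h * Suc j + (h - Suc j))
      \<le> compatible_count (Suc j)"
    using Suc density_seq_bounds[OF \<alpha>, of h j] by (intro compatible_count_Suc_ge[OF no_large]) auto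
  then show ?case
    by simp
qed

theorem fractional_helly:
  fixes \<alpha> :: real
  assumes "h \<le> card V" and \<alpha>: "0 < \<alpha>" "\<alpha> \<le> 1"
    and density: "\<alpha> * (card V choose h) \<le> card {S. S \<subseteq> V \<and> card S = h \<and> good S}"
  shows "\<exists>Z\<subseteq>V. good Z \<and> frac_helly_beta \<alpha> h * card V \<le> card Z"
proof (rule ccontr)
  define \<beta> where "\<beta> = frac_helly_beta \<alpha> h"
  define N where "N = real (card V)"
  assume "\<not> ?thesis"
  then have no_large: "\<forall>Z\<subseteq>V. good Z \<longrightarrow> card Z < \<beta> * N"
    by (auto simp: \<beta>_def N_def not_le)
  have "2 * \<beta> * N ^ (h * (h - 1) + 1) \<le> compatible_count (h - 1)"
    using compatible_count_ge[OF assms no_large[unfolded \<beta>_def N_def], of "h - 1"] h_pos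
    by (simp add: \<beta>_def frac_helly_beta_def N_def)
  also have "\<dots> \<le> N ^ (h * (h - 1)) * (\<beta> * N)"
    using compatible_count_last_le[of "\<beta> * N"] no_large by (simp add: N_def less_imp_le)
  finally have "2 * \<beta> * N ^ (h * (h - 1) + 1) \<le> \<beta> * N ^ (h * (h - 1) + 1)"
    by (simp add: algebra_simps)
  moreover have "0 < \<beta> * N ^ (h * (h - 1) + 1)"
    using frac_helly_beta_bounds[OF \<alpha>] \<open>h \<le> card V\<close> h_pos by (simp add: \<beta>_def N_def)
  ultimately show False
    by linarith
qed

end

section \<open>Axis-parallel boxes\<close>

lemma box_nonempty:
  assumes "is_box d C"
  shows "C \<noteq> {}"
proof -
  obtain a b where "\<forall>i<d. a i \<le> b i" "C = box_of d a b"
    using assms by (auto simp: is_box_def)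
  then have "(\<lambda>i. if i < d then a i else 0) \<in> C"
    by (auto simp: box_of_def)
  then show ?thesis
    by blast
qed

lemma pierceable_zero_iff: "pierceable 0 F \<longleftrightarrow> F = {}"
proof
  assume "pierceable 0 F"
  then obtain P where "finite P" "card P \<le> 0" "\<forall>C\<in>F. P \<inter> C \<noteq> {}"
    unfolding pierceable_def by blast
  then show "F = {}"
    by simp
next
  assume "F = {}"
  then show "pierceable 0 F"
    unfolding pierceable_def by (intro exI[of _ "{}"]) simp
qed

lemma pierceable_singleton:
  assumes "x \<in> C" and "0 < n"
  shows "pierceable n {C}"
  unfolding pierceable_def using assms by (intro exI[of _ "{x}"]) auto

lemma colorful_helly_boxes:
  assumes "hc_prop d n h" and "finite F" and "\<forall>C\<in>F. is_box d C"
  shows "colorful_helly F (pierceable n) h"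
proof
  show "finite F" "0 < h"
    using assms by (auto simp: hc_prop_def)
  show "\<exists>i<h. pierceable n (Fs i)"
    if "\<forall>i<h. Fs i \<subseteq> F" "\<forall>g. (\<forall>i<h. g i \<in> Fs i) \<longrightarrow> pierceable n (g ` {..<h})" for Fs
    using assms(3) that
    by (intro hc_prop_def[THEN iffD1, OF assms(1), THEN conjunct2, rule_format, OF conjI]) blast+
qed

lemma hc_prop_hc: "hc_defined d n \<Longrightarrow> hc_prop d n (hc d n)"
  unfolding hc_defined_def hc_def by (rule LeastI_ex)

lemma hc_prop_zero_one: "hc_prop d 0 1"
  unfolding hc_prop_def
proof (intro conjI allI impI)
  fix Fs :: "nat \<Rightarrow> (nat \<Rightarrow> real) set set"
  assume "(\<forall>i<1. \<forall>C\<in>Fs i. is_box d C) \<and> (\<forall>g. (\<forall>i<1. g i \<in> Fs i) \<longrightarrow> pierceable 0 (g ` {..<1}))"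
  then have "pierceable 0 ((\<lambda>_. C) ` {..<1::nat})" if "C \<in> Fs 0" for C
    using that by simp
  then have "Fs 0 = {}"
    by (auto simp: pierceable_zero_iff)
  then show "\<exists>i<1. pierceable 0 (Fs i)"
    by (auto simp: pierceable_zero_iff)
qed simp

lemma hc_zero_le_one: "hc d 0 \<le> 1"
  unfolding hc_def by (rule Least_le) (rule hc_prop_zero_one)

text \<open>For card F < hc d n the density hypothesis is vacuous, so a single box has to do; this needs
  n > 0, which holds because hc d 0 <= 1.\<close>

lemma pierceable_subfamily_of_small_family:
  assumes "hc_defined d n" and "finite F" and "\<forall>C\<in>F. is_box d C" and "card F < hc d n"
  shows "\<exists>S\<subseteq>F. card F \<le> hc d n * card S \<and> pierceable n S"
proof (cases "F = {}")
  case True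
  then show ?thesis
    unfolding pierceable_def by (intro exI[of _ "{}"]) auto
next
  case False
  then obtain C where "C \<in> F"
    by blast
  have "0 < card F"
    using False \<open>finite F\<close> by (simp add: card_gt_0_iff)
  then have "n \<noteq> 0"
    using hc_zero_le_one[of d] \<open>card F < hc d n\<close> by (cases n) auto
  moreover obtain x where "x \<in> C"
    using box_nonempty[of d C] \<open>C \<in> F\<close> assms(3) by auto
  ultimately have "pierceable n {C}"
    by (intro pierceable_singleton) auto
  then show ?thesis
    using \<open>C \<in> F\<close> \<open>card F < hc d n\<close> by (intro exI[of _ "{C}"]) auto
qed

lemma large_pierceable_subfamily:
  fixes \<alpha> :: real
  assumes \<alpha>: "0 < \<alpha>" "\<alpha> \<le> 1" and "hc_defined d n" and "finite F" and "\<forall>C\<in>F. is_box d C"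
    and density: "\<alpha> * (card F choose hc d n) \<le> card {S. S \<subseteq> F \<and> card S = hc d n \<and> pierceable n S}"
  shows "\<exists>S\<subseteq>F. frac_helly_beta \<alpha> (hc d n) * card F \<le> card S \<and> pierceable n S"
proof (cases "hc d n \<le> card F")
  case True
  interpret colorful_helly F "pierceable n" "hc d n"
    using hc_prop_hc[OF \<open>hc_defined d n\<close>] \<open>finite F\<close> \<open>\<forall>C\<in>F. is_box d C\<close>
    by (rule colorful_helly_boxes)
  show ?thesis
    using fractional_helly[OF True \<alpha> density] by blast
next
  case False
  let ?\<beta> = "frac_helly_beta \<alpha> (hc d n)"
  obtain S where "S \<subseteq> F" "card F \<le> hc d n * card S" "pierceable n S"
    using pierceable_subfamily_of_small_family[OF \<open>hc_defined d n\<close> \<open>finite F\<close>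
        \<open>\<forall>C\<in>F. is_box d C\<close>] False by auto
  moreover have "?\<beta> * card F \<le> ?\<beta> * hc d n * card S"
    using \<open>card F \<le> hc d n * card S\<close> frac_helly_beta_bounds(1)[OF \<alpha>]
    by (simp flip: of_nat_mult add: mult.assoc)
  moreover have "?\<beta> * hc d n * card S \<le> card S"
    using mult_right_mono[OF frac_helly_beta_bounds(3)[OF \<alpha>], of "card S"] by simp
  ultimately show ?thesis
    using order_trans by blast
qed

theorem theorem6:
  fixes \<alpha> :: real and h :: nat
  assumes "0 < \<alpha>" and "\<alpha> < 1"
  shows "\<exists>\<beta>::real. 0 < \<beta> \<and> \<beta> < 1 \<and>
    (\<forall>d n (F :: (nat \<Rightarrow> real) set set).
       hc_defined d n \<and> hc d n = h \<and> finite F \<and> (\<forall>C\<in>F. is_box d C) \<and>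
       real (card {S. S \<subseteq> F \<and> card S = hc d n \<and> pierceable n S})
         \<ge> \<alpha> * real (card F choose hc d n)
       \<longrightarrow> (\<exists>S\<subseteq>F. real (card S) \<ge> \<beta> * real (card F) \<and> pierceable n S))"
proof (intro exI[of _ "frac_helly_beta \<alpha> h"] conjI allI impI)
  have \<alpha>: "0 < \<alpha>" "\<alpha> \<le> 1"
    using assms by auto
  then show "0 < frac_helly_beta \<alpha> h" "frac_helly_beta \<alpha> h < 1"
    by (rule frac_helly_beta_bounds)+
  fix d n and F :: "(nat \<Rightarrow> real) set set"
  assume "hc_defined d n \<and> hc d n = h \<and> finite F \<and> (\<forall>C\<in>F. is_box d C) \<and>
    real (card {S. S \<subseteq> F \<and> card S = hc d n \<and> pierceable n S}) \<ge> \<alpha> * real (card F choose hc d n)"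
  then show "\<exists>S\<subseteq>F. real (card S) \<ge> frac_helly_beta \<alpha> h * real (card F) \<and> pierceable n S"
    using large_pierceable_subfamily[OF \<alpha>, of d n F] by auto
qed

end
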